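(* For every integer $n\ge 1$, the number of permutations of $\{1,\dots,n\}$ that contain the pattern $321$ exactly once equals $$\frac{3}{n}\binom{2n}{n+3}=\frac{3}{n}\cdot\frac{(2n)!}{(n-3)!\,(n+3)!},$$ where the right-hand side is interpreted as $0$ when $n<3$.
   Context: A permutation $\pi=\pi(1)\pi(2)\cdots\pi(n)$ of $\{1,\dots,n\}$ (written in one-line notation) contains an occurrence of the pattern $321$ at positions $i<j<k$ if $\pi(i)>\pi(j)>\pi(k)$. "Contains the pattern $321$ exactly once" means there is exactly one triple of positions $i<j<k$ with $\pi(i)>\pi(j)>\pi(k)$. A permutation is $321$-avoiding if it has no such triple. *)

theory Defs
  imports Complex_Main "HOL-Combinatorics.Permutations"
begin

definition occ321 :: "nat \<Rightarrow> (nat \<Rightarrow> nat) \<Rightarrow> (nat \<times> nat \<times> nat) set" where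
  "occ321 n p = {(i, j, k). 1 \<le> i \<and> i < j \<and> j < k \<and> k \<le> n \<and> p i > p j \<and> p j > p k}"

end

theory Submission
  imports Defs "HOL-Computational_Algebra.Formal_Power_Series"
begin

text \<open>A list with exactly one 321, at positions \<open>i0 < s < k0\<close>, has its middle entry equal to its
  position \<open>s\<close>: every other entry to its left is smaller and every other entry to its right is larger.
  Cutting at \<open>s\<close> therefore splits it bijectively into a 321-avoiding arrangement of \<open>{0..s}\<close> not
  ending in its maximum and one of \<open>{0..<n-s}\<close> not starting with its minimum. Refining by the length
  of the final increasing run shows that 321-avoiders of length \<open>m\<close> are counted by \<open>[x^m] C(x)\<close>,
  \<open>C\<close> the Catalan series, so each kind of piece with \<open>j + 2\<close> entries is counted by \<open>[x^j] C(x)^3\<close>.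
  Summing the products over \<open>s\<close> gives \<open>[x^(n-3)] C(x)^6\<close>, which the ballot formula evaluates to
  \<open>6/(2n) binom(2n, n-3)\<close>.\<close>

section \<open>Catalan and ballot numbers\<close>

function catalan :: "nat \<Rightarrow> nat" where
  "catalan 0 = 1"
| "catalan (Suc n) = (\<Sum>i\<le>n. catalan i * catalan (n - i))"
  by pat_completeness auto
termination by (relation "measure id") auto

definition catalan_fps :: "nat fps" where
  "catalan_fps = Abs_fps catalan"

lemma catalan_fps_eq: "catalan_fps = 1 + fps_X * catalan_fps ^ 2"
proof (rule fps_ext)
  fix n
  show "fps_nth catalan_fps n = fps_nth (1 + fps_X * catalan_fps ^ 2) n"
  proof (cases n)
    case (Suc m)
    have "fps_nth (1 + fps_X * catalan_fps ^ 2) n = fps_nth (catalan_fps * catalan_fps) m"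
      by (simp add: Suc power2_eq_square)
    also have "\<dots> = catalan n"
      by (simp add: Suc fps_mult_nth catalan_fps_def atLeast0AtMost)
    finally show ?thesis by (simp add: catalan_fps_def)
  qed (simp add: catalan_fps_def)
qed

definition ballot :: "nat \<Rightarrow> nat \<Rightarrow> nat" where
  "ballot k n = fps_nth (catalan_fps ^ k) n"

lemma ballot_0_right [simp]: "ballot k 0 = 1"
  by (simp add: ballot_def fps_nth_power_0 catalan_fps_def)

lemma ballot_0_Suc [simp]: "ballot 0 (Suc n) = 0"
  by (simp add: ballot_def)

lemma ballot_Suc_Suc: "ballot (Suc k) (Suc n) = ballot k (Suc n) + ballot (k + 2) n"
proof -
  have "catalan_fps ^ Suc k = catalan_fps ^ k * catalan_fps"
    by (simp add: mult.commute)
  also have "\<dots> = catalan_fps ^ k + fps_X * catalan_fps ^ (k + 2)"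
    by (subst (2) catalan_fps_eq) (simp add: algebra_simps power_add power2_eq_square)
  finally have "catalan_fps ^ Suc k = catalan_fps ^ k + fps_X * catalan_fps ^ (k + 2)" .
  then show ?thesis
    unfolding ballot_def by (simp only: fps_add_nth fps_X_mult_nth) simp
qed

lemma ballot_add: "ballot (a + b) n = (\<Sum>i=0..n. ballot a i * ballot b (n - i))"
  by (simp add: ballot_def power_add fps_mult_nth)

lemma ballot_formula: "(2 * n + k) * ballot k n = k * ((2 * n + k) choose n)"
proof (induction n arbitrary: k)
  case 0
  then show ?case by simp
next
  case (Suc n)
  note shorter = Suc.IH
  show ?case
  proof (induction k)
    case (Suc k)
    define N where "N = 2 * n + k + 2"
    define B where "B = N choose n"
    have lower: "N * ballot k (Suc n) = k * (N choose Suc n)"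
      using Suc.IH by (simp add: N_def algebra_simps)
    have upper: "N * ballot (k + 2) n = (k + 2) * B"
      using shorter[of "k + 2"] by (simp add: N_def B_def algebra_simps)
    have "N = Suc (n + (n + k + 1))"
      by (simp add: N_def)
    then have pascal_lower: "Suc n * (N choose Suc n) = Suc (n + k + 1) * B"
      unfolding B_def by (simp only: Suc_times_binomial_add)
    have pascal_upper: "Suc n * (Suc N choose Suc n) = Suc N * B"
      using Suc_times_binomial[of n N] by (simp add: B_def)
    have "N * Suc n * (Suc N * ballot (Suc k) (Suc n))
        = Suc N * Suc n * (N * ballot k (Suc n)) + Suc N * Suc n * (N * ballot (k + 2) n)"
      by (simp only: ballot_Suc_Suc algebra_simps)
    also have "\<dots> = Suc N * k * (Suc n * (N choose Suc n)) + Suc N * Suc n * ((k + 2) * B)"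
      by (simp only: lower upper ac_simps)
    also have "\<dots> = N * Suc k * (Suc N * B)"
      unfolding pascal_lower by (simp add: N_def algebra_simps)
    also have "\<dots> = N * Suc k * (Suc n * (Suc N choose Suc n))"
      by (simp only: pascal_upper)
    also have "\<dots> = N * Suc n * (Suc k * (Suc N choose Suc n))"
      by (simp only: ac_simps)
    finally have "Suc N * ballot (Suc k) (Suc n) = Suc k * (Suc N choose Suc n)"
      using mult_left_cancel[of "N * Suc n"] by (simp add: N_def)
    then show ?case
      by (simp add: N_def algebra_simps)
  qed simp
qed

section \<open>321-avoiding lists\<close>

definition occs321 :: "nat list \<Rightarrow> (nat \<times> nat \<times> nat) set" where
  "occs321 xs = {(i, j, k). i < j \<and> j < k \<and> k < length xs \<and> xs ! j < xs ! i \<and> xs ! k < xs ! j}"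

definition avoids321 :: "nat list \<Rightarrow> bool" where
  "avoids321 xs \<longleftrightarrow> occs321 xs = {}"

lemma avoids321_iff:
  "avoids321 xs \<longleftrightarrow>
     (\<forall>i j k. i < j \<longrightarrow> j < k \<longrightarrow> k < length xs \<longrightarrow> \<not> (xs ! j < xs ! i \<and> xs ! k < xs ! j))"
  by (auto simp: avoids321_def occs321_def)

lemma occs321_embed:
  assumes "(i, j, k) \<in> occs321 xs"
    and "\<And>u v. u < v \<Longrightarrow> v < length xs \<Longrightarrow> e u < e v"
    and "\<And>u. u < length xs \<Longrightarrow> e u < length ys"
    and "\<And>u v. u < length xs \<Longrightarrow> v < length xs \<Longrightarrow> xs ! u < xs ! v \<Longrightarrow> ys ! e u < ys ! e v"
  shows "(e i, e j, e k) \<in> occs321 ys"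
  using assms by (simp add: occs321_def)

lemma avoids321_embed:
  assumes "avoids321 ys"
    and "\<And>u v. u < v \<Longrightarrow> v < length xs \<Longrightarrow> e u < e v"
    and "\<And>u. u < length xs \<Longrightarrow> e u < length ys"
    and "\<And>u v. u < length xs \<Longrightarrow> v < length xs \<Longrightarrow> xs ! u < xs ! v \<Longrightarrow> ys ! e u < ys ! e v"
  shows "avoids321 xs"
proof -
  have "(i, j, k) \<notin> occs321 xs" for i j k
    using occs321_embed[of i j k xs e ys] assms unfolding avoids321_def by blast
  then show ?thesis
    unfolding avoids321_def by auto
qed

lemma avoids321_embed_unique_occ:
  assumes "occs321 ys = {(i0, s, k0)}"
    and "\<And>u v. u < v \<Longrightarrow> v < length xs \<Longrightarrow> e u < e v"
    and "\<And>u. u < length xs \<Longrightarrow> e u < length ys"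
    and "\<And>u v. u < length xs \<Longrightarrow> v < length xs \<Longrightarrow> xs ! u < xs ! v \<Longrightarrow> ys ! e u < ys ! e v"
    and "\<And>u. u < length xs \<Longrightarrow> e u \<noteq> s"
  shows "avoids321 xs"
proof -
  have "(i, j, k) \<notin> occs321 xs" for i j k
  proof
    assume occ: "(i, j, k) \<in> occs321 xs"
    then have "(e i, e j, e k) \<in> occs321 ys"
      using assms(2-4) by (rule occs321_embed)
    moreover have "j < length xs"
      using occ by (auto simp: occs321_def)
    ultimately show False
      using assms(1,5) by auto
  qed
  then show ?thesis
    unfolding avoids321_def by auto
qed

lemma distinct_embed:
  assumes "distinct ys" "\<And>t. t < length xs \<Longrightarrow> e t < length ys" "inj_on e {..<length xs}"
    and "\<And>t. t < length xs \<Longrightarrow> ys ! e t = f (xs ! t)"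
  shows "distinct xs"
  unfolding distinct_conv_nth
proof (intro allI impI)
  fix t u assume t: "t < length xs" and u: "u < length xs" and "t \<noteq> u"
  then have "e t \<noteq> e u"
    using assms(3) by (auto simp: inj_on_def)
  then have "ys ! e t \<noteq> ys ! e u"
    using assms(1,2) t u by (simp add: nth_eq_iff_index_eq)
  then show "xs ! t \<noteq> xs ! u"
    using assms(4) t u by auto
qed

lemma avoids321_map:
  assumes "\<forall>x\<in>set xs. \<forall>y\<in>set xs. f x < f y \<longleftrightarrow> x < y"
  shows "avoids321 (map f xs) \<longleftrightarrow> avoids321 xs"
proof
  assume "avoids321 (map f xs)"
  then show "avoids321 xs"
    by (rule avoids321_embed[where e = id]) (use assms in auto)
next
  assume "avoids321 xs"
  then show "avoids321 (map f xs)"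
    by (rule avoids321_embed[where e = id]) (use assms in auto)
qed

lemma avoids321_Cons_min:
  assumes min: "\<forall>x\<in>set xs. m < x"
  shows "avoids321 (m # xs) \<longleftrightarrow> avoids321 xs"
proof
  assume "avoids321 (m # xs)"
  then show "avoids321 xs"
    by (rule avoids321_embed[where e = Suc]) auto
next
  assume av: "avoids321 xs"
  show "avoids321 (m # xs)"
    unfolding avoids321_iff
  proof (intro allI impI notI)
    fix i j k
    assume ij: "i < j" and jk: "j < k" and k: "k < length (m # xs)"
      and c: "(m # xs) ! j < (m # xs) ! i \<and> (m # xs) ! k < (m # xs) ! j"
    obtain j' k' where jk': "j = Suc j'" "k = Suc k'"
      using ij jk by (cases j; cases k) auto
    show False
    proof (cases i)
      case 0
      have "xs ! j' \<in> set xs"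
        using jk jk' k by simp
      then show False using c min 0 jk' by auto
    next
      case (Suc i')
      then show False
        using av[unfolded avoids321_iff, rule_format, of i' j' k'] ij jk k c jk' by simp
    qed
  qed
qed

lemma nth_append_Cons:
  "(A @ M # B) ! t = (if t < length A then A ! t else if t = length A then M else B ! (t - length A - 1))"
  by (cases "t - length A") (auto simp: nth_append)

lemma avoids321_insert_maxD:
  assumes av: "avoids321 (A @ M # B)" and dist: "distinct (A @ B)" and max: "\<forall>x\<in>set (A @ B). x < M"
  shows "avoids321 (A @ B)" "sorted_wrt (<) B"
proof -
  let ?a = "length A"
  show "avoids321 (A @ B)"
    by (rule avoids321_embed[OF av, where e = "\<lambda>t. if t < ?a then t else Suc t"])
      (auto simp: nth_append_Cons nth_append)
  show "sorted_wrt (<) B"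
    unfolding sorted_wrt_iff_nth_less
  proof (intro allI impI)
    fix i j assume ij: "i < j" and j: "j < length B"
    have "B ! i \<noteq> B ! j"
      using dist ij j by (simp add: nth_eq_iff_index_eq)
    moreover have "B ! i < M"
      using max ij j by auto
    moreover have "\<not> (B ! i < M \<and> B ! j < B ! i)"
      using av[unfolded avoids321_iff, rule_format, of ?a "?a + 1 + i" "?a + 1 + j"] ij j
      by (simp add: nth_append)
    ultimately show "B ! i < B ! j" by auto
  qed
qed

lemma avoids321_insert_maxI:
  assumes av: "avoids321 (A @ B)" and sorted: "sorted_wrt (<) B" and max: "\<forall>x\<in>set (A @ B). x < M"
  shows "avoids321 (A @ M # B)"
proof -
  let ?a = "length A"
  show "avoids321 (A @ M # B)"
    unfolding avoids321_iff
  proof (intro allI impI notI)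
    fix i j k
    assume ij: "i < j" and jk: "j < k" and k: "k < length (A @ M # B)"
      and c: "(A @ M # B) ! j < (A @ M # B) ! i \<and> (A @ M # B) ! k < (A @ M # B) ! j"
    have below_M: "t < length (A @ M # B) \<Longrightarrow> t \<noteq> ?a \<Longrightarrow> (A @ M # B) ! t < M" for t
      using max by (auto simp: nth_append_Cons)
    consider "j = ?a" | "k = ?a" | "i = ?a" | "i \<noteq> ?a" "j \<noteq> ?a" "k \<noteq> ?a" by blast
    then show False
    proof cases
      case 1
      have "(A @ M # B) ! i < M"
        using below_M 1 ij jk k by simp
      then show ?thesis using c 1 by (simp add: nth_append)
    next
      case 2
      have "(A @ M # B) ! j < M"
        using below_M 2 jk k by simp
      then show ?thesis using c 2 by (simp add: nth_append)
    next
      case 3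
      have "B ! (j - ?a - 1) < B ! (k - ?a - 1)"
        using sorted 3 ij jk k unfolding sorted_wrt_iff_nth_less by auto
      moreover have "(A @ M # B) ! j = B ! (j - ?a - 1)" "(A @ M # B) ! k = B ! (k - ?a - 1)"
        using 3 ij jk by (simp_all add: nth_append_Cons)
      ultimately show ?thesis using c by simp
    next
      case 4
      define e where "e t = (if t < ?a then t else t - 1)" for t
      have shift: "t < length (A @ M # B) \<Longrightarrow> t \<noteq> ?a \<Longrightarrow> (A @ B) ! e t = (A @ M # B) ! t" for t
        by (auto simp: e_def nth_append nth_Cons')
      have "e i < e j" "e j < e k" "e k < length (A @ B)"
        using ij jk k 4 by (auto simp: e_def)
      then have "\<not> ((A @ B) ! e j < (A @ B) ! e i \<and> (A @ B) ! e k < (A @ B) ! e j)"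
        using av unfolding avoids321_iff by blast
      then show False
        using c shift[of i] shift[of j] shift[of k] ij jk k 4 by simp
    qed
  qed
qed

definition perm_lists :: "nat \<Rightarrow> nat list set" where
  "perm_lists n = {xs. distinct xs \<and> set xs = {0..<n}}"

lemma length_perm_lists: "xs \<in> perm_lists n \<Longrightarrow> length xs = n"
  unfolding perm_lists_def using distinct_card[of xs] by auto

lemma finite_perm_lists: "finite (perm_lists n)"
proof (rule finite_subset)
  show "perm_lists n \<subseteq> {xs. set xs \<subseteq> {0..<n} \<and> length xs = n}"
    using length_perm_lists by (auto simp: perm_lists_def)
  show "finite {xs. set xs \<subseteq> {0..<n} \<and> length xs = n}"
    by (rule finite_lists_length_eq) simp
qed

lemma perm_listsI:
  assumes "distinct xs" "length xs = n" "\<forall>x\<in>set xs. x < n"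
  shows "xs \<in> perm_lists n"
proof -
  have "set xs \<subseteq> {0..<n}" "card (set xs) = card {0..<n}"
    using assms distinct_card by fastforce+
  then show ?thesis
    using assms(1) by (simp add: perm_lists_def card_subset_eq)
qed

lemma perm_lists_bounded: "xs \<in> perm_lists m \<Longrightarrow> \<forall>y\<in>set xs. y < m"
  by (simp add: perm_lists_def)

lemma perm_lists_insert: "A @ B \<in> perm_lists m \<Longrightarrow> A @ m # B \<in> perm_lists (Suc m)"
  by (auto simp: perm_lists_def)

lemma perm_lists_Suc_cases:
  assumes "xs \<in> perm_lists (Suc m)"
  obtains A B where "xs = A @ m # B" "A @ B \<in> perm_lists m"
proof -
  have "m \<in> set xs"
    using assms by (simp add: perm_lists_def)
  then obtain A B where xs: "xs = A @ m # B"
    by (meson split_list)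
  have "distinct (A @ m # B)" "set (A @ m # B) = {0..<Suc m}"
    using assms xs by (simp_all add: perm_lists_def)
  then have "distinct (A @ B)" "set (A @ B) = {0..<m}"
    by (auto simp: atLeast0_lessThan_Suc)
  then show thesis
    using that[OF xs] by (simp add: perm_lists_def)
qed

definition av321 :: "nat \<Rightarrow> nat list set" where
  "av321 n = {xs \<in> perm_lists n. avoids321 xs}"

lemma finite_av321: "finite (av321 n)"
  unfolding av321_def using finite_perm_lists by simp

lemma av321_insert_max:
  assumes "A @ B \<in> perm_lists m"
  shows "A @ m # B \<in> av321 (Suc m) \<longleftrightarrow> A @ B \<in> av321 m \<and> sorted_wrt (<) B"
  using assms avoids321_insert_maxD[of A m B] avoids321_insert_maxI[of A B m] perm_lists_insert[OF assms]
  by (auto simp: av321_def perm_lists_def)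

lemma av321_Suc_cases:
  assumes "xs \<in> av321 (Suc m)"
  obtains A B where "xs = A @ m # B" "A @ B \<in> av321 m" "sorted_wrt (<) B"
proof -
  have "xs \<in> perm_lists (Suc m)"
    using assms by (simp add: av321_def)
  then obtain A B where "xs = A @ m # B" "A @ B \<in> perm_lists m"
    by (rule perm_lists_Suc_cases)
  then show thesis
    using that assms av321_insert_max by blast
qed

definition inc_suffix_len :: "nat list \<Rightarrow> nat" where
  "inc_suffix_len xs = (GREATEST k. k \<le> length xs \<and> sorted_wrt (<) (drop (length xs - k) xs))"

lemma inc_suffix_len:
  "inc_suffix_len xs \<le> length xs \<and> sorted_wrt (<) (drop (length xs - inc_suffix_len xs) xs)"
proof -
  let ?P = "\<lambda>k. k \<le> length xs \<and> sorted_wrt (<) (drop (length xs - k) xs)"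
  have "?P 0" by simp
  then have "?P (Greatest ?P)"
    by (rule GreatestI_nat[where b = "length xs"]) auto
  then show ?thesis
    unfolding inc_suffix_len_def .
qed

lemma inc_suffix_len_le: "inc_suffix_len xs \<le> length xs"
  using inc_suffix_len by blast

lemma le_inc_suffix_len_iff:
  assumes "k \<le> length xs"
  shows "k \<le> inc_suffix_len xs \<longleftrightarrow> sorted_wrt (<) (drop (length xs - k) xs)"
proof
  assume "k \<le> inc_suffix_len xs"
  then have "drop (length xs - k) xs = drop (inc_suffix_len xs - k) (drop (length xs - inc_suffix_len xs) xs)"
    using inc_suffix_len_le[of xs] by (simp add: add.commute)
  then show "sorted_wrt (<) (drop (length xs - k) xs)"
    using inc_suffix_len[of xs] sorted_wrt_drop by metis
next
  assume "sorted_wrt (<) (drop (length xs - k) xs)"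
  then show "k \<le> inc_suffix_len xs"
    unfolding inc_suffix_len_def by (intro Greatest_le_nat[where b = "length xs"]) (use assms in auto)
qed

lemma inc_suffix_len_eqI:
  assumes "r \<le> length xs"
    and "\<And>k. k \<le> length xs \<Longrightarrow> k \<le> r \<longleftrightarrow> sorted_wrt (<) (drop (length xs - k) xs)"
  shows "inc_suffix_len xs = r"
  using assms le_inc_suffix_len_iff inc_suffix_len_le by (metis le_antisym order_refl)

lemma inc_suffix_len_pos: "xs \<noteq> [] \<Longrightarrow> 0 < inc_suffix_len xs"
  using le_inc_suffix_len_iff[of 1 xs] by (cases xs rule: rev_cases) auto

lemma length_le_inc_suffix_len: "sorted_wrt (<) B \<Longrightarrow> length B \<le> inc_suffix_len (A @ B)"
  using le_inc_suffix_len_iff[of "length B" "A @ B"] by simp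

lemma inc_suffix_len_snoc_max:
  assumes "\<forall>y\<in>set ys. y < M"
  shows "inc_suffix_len (ys @ [M]) = Suc (inc_suffix_len ys)"
proof (rule inc_suffix_len_eqI)
  show "Suc (inc_suffix_len ys) \<le> length (ys @ [M])"
    using inc_suffix_len_le[of ys] by simp
  fix k assume k: "k \<le> length (ys @ [M])"
  show "k \<le> Suc (inc_suffix_len ys) \<longleftrightarrow> sorted_wrt (<) (drop (length (ys @ [M]) - k) (ys @ [M]))"
  proof (cases k)
    case (Suc k')
    then have k': "k' \<le> length ys"
      using k by simp
    have "sorted_wrt (<) (drop (length ys - k') ys @ [M]) \<longleftrightarrow> sorted_wrt (<) (drop (length ys - k') ys)"
      using assms by (auto simp: sorted_wrt_append dest: in_set_dropD)
    then show ?thesis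
      using le_inc_suffix_len_iff[OF k'] Suc k' by simp
  qed simp
qed

lemma inc_suffix_len_insert_max_nonempty:
  assumes "B \<noteq> []" "sorted_wrt (<) B" "\<forall>y\<in>set B. y < M"
  shows "inc_suffix_len (A @ M # B) = length B"
proof (rule inc_suffix_len_eqI)
  fix k assume k: "k \<le> length (A @ M # B)"
  show "k \<le> length B \<longleftrightarrow> sorted_wrt (<) (drop (length (A @ M # B) - k) (A @ M # B))"
  proof
    assume "k \<le> length B"
    then have "drop (length (A @ M # B) - k) (A @ M # B) = drop (length B - k) B"
      by (simp add: Suc_diff_le)
    then show "sorted_wrt (<) (drop (length (A @ M # B) - k) (A @ M # B))"
      using assms(2) by simp
  next
    assume sorted: "sorted_wrt (<) (drop (length (A @ M # B) - k) (A @ M # B))"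
    show "k \<le> length B"
    proof (rule ccontr)
      assume "\<not> k \<le> length B"
      then have "drop (length (A @ M # B) - k) (A @ M # B) = drop (length A - (k - Suc (length B))) A @ M # B"
        using k by simp
      then have "sorted_wrt (<) (M # B)"
        using sorted by (simp add: sorted_wrt_append)
      then show False
        using assms(1,3) by (cases B) auto
    qed
  qed
qed simp

lemma inc_suffix_len_insert_max:
  assumes "sorted_wrt (<) B" "\<forall>y\<in>set (A @ B). y < M"
  shows "inc_suffix_len (A @ M # B) = (if B = [] then Suc (inc_suffix_len A) else length B)"
  using assms inc_suffix_len_snoc_max[of A M] inc_suffix_len_insert_max_nonempty[of B M A] by auto

text \<open>Inserts the new maximum \<open>m\<close> so that the increasing suffix of the result has length \<open>r\<close>
  (for \<open>0 < r \<le> inc_suffix_len ys + 1\<close>).\<close>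

definition insert_max :: "nat \<Rightarrow> nat \<Rightarrow> nat list \<Rightarrow> nat list" where
  "insert_max m r ys =
     (let k = (if r = Suc (inc_suffix_len ys) then 0 else r) in take (m - k) ys @ m # drop (m - k) ys)"

lemma removeAll_max_av321:
  assumes "xs \<in> av321 (Suc m)" "inc_suffix_len xs = r"
  shows "removeAll m xs \<in> av321 m" "r - 1 \<le> inc_suffix_len (removeAll m xs)"
    "insert_max m r (removeAll m xs) = xs"
proof -
  obtain A B where xs: "xs = A @ m # B" and av: "A @ B \<in> av321 m" and sorted: "sorted_wrt (<) B"
    using assms(1) by (rule av321_Suc_cases)
  have perm: "A @ B \<in> perm_lists m"
    using av by (simp add: av321_def)
  have bounded: "\<forall>y\<in>set (A @ B). y < m" and len: "length (A @ B) = m"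
    using perm by (rule perm_lists_bounded, rule length_perm_lists)
  have "m \<notin> set A" "m \<notin> set B"
    using bounded by auto
  then have removed: "removeAll m xs = A @ B"
    using xs by simp
  have r: "r = (if B = [] then Suc (inc_suffix_len A) else length B)"
    using assms(2) inc_suffix_len_insert_max[OF sorted bounded] xs by simp
  have suffix: "length B \<le> inc_suffix_len (A @ B)"
    using length_le_inc_suffix_len[OF sorted] .
  show "removeAll m xs \<in> av321 m"
    using removed av by simp
  show "r - 1 \<le> inc_suffix_len (removeAll m xs)"
    using r suffix removed by (cases "B = []") auto
  show "insert_max m r (removeAll m xs) = xs"
    using r suffix removed xs len by (cases "B = []") (auto simp: insert_max_def)
qed

lemma insert_max_av321:
  assumes "ys \<in> av321 m" "0 < r" "r - 1 \<le> inc_suffix_len ys"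
  shows "insert_max m r ys \<in> av321 (Suc m)" "inc_suffix_len (insert_max m r ys) = r"
    "removeAll m (insert_max m r ys) = ys"
proof -
  have perm: "ys \<in> perm_lists m"
    using assms(1) by (simp add: av321_def)
  have len: "length ys = m" and bounded: "\<forall>y\<in>set ys. y < m"
    using perm by (rule length_perm_lists, rule perm_lists_bounded)
  define k where "k = (if r = Suc (inc_suffix_len ys) then 0 else r)"
  have k: "k \<le> inc_suffix_len ys" "k \<le> m"
    using assms(2,3) inc_suffix_len_le[of ys] len by (auto simp: k_def)
  define A where "A = take (m - k) ys"
  define B where "B = drop (m - k) ys"
  have ys: "ys = A @ B" and lenB: "length B = k"
    using len k by (simp_all add: A_def B_def)
  have sorted: "sorted_wrt (<) B"
    using le_inc_suffix_len_iff[of k ys] k len by (simp add: B_def)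
  have inserted: "insert_max m r ys = A @ m # B"
    by (simp add: insert_max_def Let_def A_def B_def k_def)
  show "insert_max m r ys \<in> av321 (Suc m)"
    using av321_insert_max[of A B m] perm assms(1) sorted ys inserted by simp
  show "inc_suffix_len (insert_max m r ys) = r"
    using inc_suffix_len_insert_max[of B A m] sorted bounded ys inserted lenB assms(2)
    by (auto simp: k_def split: if_splits)
  have "m \<notin> set A" "m \<notin> set B"
    using bounded ys by auto
  then show "removeAll m (insert_max m r ys) = ys"
    using inserted ys by simp
qed

definition av321_suffix_count :: "nat \<Rightarrow> nat \<Rightarrow> nat" where
  "av321_suffix_count m r = card {xs \<in> av321 m. inc_suffix_len xs = r}"

lemma av321_suffix_count_Suc:
  assumes "0 < r"
  shows "av321_suffix_count (Suc m) r = card {ys \<in> av321 m. r - 1 \<le> inc_suffix_len ys}"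
  unfolding av321_suffix_count_def
proof (rule bij_betw_same_card[of "removeAll m"], rule bij_betw_byWitness[where f' = "insert_max m r"])
  show "\<forall>xs\<in>{xs \<in> av321 (Suc m). inc_suffix_len xs = r}. insert_max m r (removeAll m xs) = xs"
    "removeAll m ` {xs \<in> av321 (Suc m). inc_suffix_len xs = r} \<subseteq> {ys \<in> av321 m. r - 1 \<le> inc_suffix_len ys}"
    using removeAll_max_av321 by auto
  show "\<forall>ys\<in>{ys \<in> av321 m. r - 1 \<le> inc_suffix_len ys}. removeAll m (insert_max m r ys) = ys"
    "insert_max m r ` {ys \<in> av321 m. r - 1 \<le> inc_suffix_len ys} \<subseteq> {xs \<in> av321 (Suc m). inc_suffix_len xs = r}"
    using insert_max_av321[OF _ assms] by auto
qed

lemma av321_suffix_count_rec: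
  assumes "0 < r"
  shows "av321_suffix_count (Suc m) r = av321_suffix_count m (r - 1) + av321_suffix_count (Suc m) (Suc r)"
proof -
  have split: "{ys \<in> av321 m. r - 1 \<le> inc_suffix_len ys}
      = {ys \<in> av321 m. inc_suffix_len ys = r - 1} \<union> {ys \<in> av321 m. r \<le> inc_suffix_len ys}"
    using assms by auto
  have finite: "finite {ys \<in> av321 m. P ys}" for P
    using finite_av321 by simp
  have "{ys \<in> av321 m. inc_suffix_len ys = r - 1} \<inter> {ys \<in> av321 m. r \<le> inc_suffix_len ys} = {}"
    using assms by auto
  then have "card ({ys \<in> av321 m. inc_suffix_len ys = r - 1} \<union> {ys \<in> av321 m. r \<le> inc_suffix_len ys})
      = av321_suffix_count m (r - 1) + card {ys \<in> av321 m. r \<le> inc_suffix_len ys}"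
    unfolding av321_suffix_count_def by (rule card_Un_disjoint[OF finite finite])
  then show ?thesis
    using av321_suffix_count_Suc[of r m] av321_suffix_count_Suc[of "Suc r" m] assms unfolding split by simp
qed

lemma av321_suffix_count_eq_0:
  assumes "m < r \<or> (r = 0 \<and> 0 < m)"
  shows "av321_suffix_count m r = 0"
proof -
  have "inc_suffix_len xs \<noteq> r" if "xs \<in> av321 m" for xs
  proof -
    have "length xs = m"
      using that by (simp add: av321_def length_perm_lists)
    then show ?thesis
      using assms inc_suffix_len_le[of xs] inc_suffix_len_pos[of xs] by auto
  qed
  then have "{xs \<in> av321 m. inc_suffix_len xs = r} = {}"
    by blast
  then show ?thesis
    unfolding av321_suffix_count_def by (simp only: card.empty)
qed

lemma av321_suffix_count_0_0: "av321_suffix_count 0 0 = 1"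
proof -
  have "{xs \<in> av321 0. inc_suffix_len xs = 0} = {[]}"
    using inc_suffix_len_le[of "[]"] by (auto simp: av321_def perm_lists_def avoids321_iff)
  then show ?thesis
    by (simp add: av321_suffix_count_def)
qed

lemma av321_suffix_count_ballot: "av321_suffix_count (r + n) r = ballot r n"
proof (induction n arbitrary: r)
  case 0
  show ?case
  proof (induction r)
    case (Suc r)
    then show ?case
      using av321_suffix_count_rec[of "Suc r" r] av321_suffix_count_eq_0[of "Suc r" "Suc (Suc r)"] by simp
  qed (simp add: av321_suffix_count_0_0)
next
  case (Suc n)
  note longer = Suc.IH
  show ?case
  proof (induction r)
    case 0
    then show ?case
      using av321_suffix_count_eq_0[of "Suc n" 0] by simp
  next
    case (Suc r)
    have "av321_suffix_count (Suc r + Suc n) (Suc r)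
        = av321_suffix_count (r + Suc n) r + av321_suffix_count (Suc (Suc r) + n) (Suc (Suc r))"
      using av321_suffix_count_rec[of "Suc r" "r + Suc n"] by simp
    then show ?case
      using Suc.IH longer[of "Suc (Suc r)"] ballot_Suc_Suc[of r n] by simp
  qed
qed

lemma card_av321: "card (av321 m) = ballot 1 m"
proof -
  have "card (av321 m) = card {ys \<in> av321 m. 1 - 1 \<le> inc_suffix_len ys}"
    by simp
  also have "\<dots> = av321_suffix_count (1 + m) 1"
    using av321_suffix_count_Suc[of 1 m] by simp
  finally show ?thesis
    using av321_suffix_count_ballot[of 1 m] by simp
qed

lemma card_filter_split: "finite X \<Longrightarrow> card X = card {x \<in> X. \<not> P x} + card {x \<in> X. P x}"
  by (subst card_Un_disjoint[symmetric]) (auto intro: arg_cong[where f = card])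

lemma av321_last_max: "{xs \<in> av321 (Suc m). last xs = m} = (\<lambda>ys. ys @ [m]) ` av321 m"
proof (intro equalityI subsetI)
  fix xs assume "xs \<in> {xs \<in> av321 (Suc m). last xs = m}"
  then have av: "xs \<in> av321 (Suc m)" and last: "last xs = m"
    by auto
  obtain A B where xs: "xs = A @ m # B" and AB: "A @ B \<in> av321 m"
    using av by (rule av321_Suc_cases)
  have "\<forall>y\<in>set (A @ B). y < m"
    using AB perm_lists_bounded[of "A @ B" m] by (simp add: av321_def)
  then have "m \<notin> set B"
    by auto
  then have "B = []"
    using last xs by (cases B rule: rev_cases) auto
  then show "xs \<in> (\<lambda>ys. ys @ [m]) ` av321 m"
    using xs AB by simp
next
  fix xs assume "xs \<in> (\<lambda>ys. ys @ [m]) ` av321 m"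
  then obtain ys where "ys \<in> av321 m" "xs = ys @ [m]"
    by blast
  then show "xs \<in> {xs \<in> av321 (Suc m). last xs = m}"
    using av321_insert_max[of ys "[]" m] by (simp add: av321_def)
qed

lemma Cons_0_map_Suc_perm_lists:
  "0 # map Suc ys \<in> perm_lists (Suc m) \<longleftrightarrow> ys \<in> perm_lists m"
proof -
  have "insert 0 (Suc ` set ys) = insert 0 (Suc ` {0..<m}) \<longleftrightarrow> Suc ` set ys = Suc ` {0..<m}"
    by blast
  also have "\<dots> \<longleftrightarrow> set ys = {0..<m}"
    by (rule inj_image_eq_iff) (rule inj_Suc)
  finally show ?thesis
    by (auto simp: perm_lists_def distinct_map atLeast0_lessThan_Suc_eq_insert_0)
qed

lemma avoids321_Cons_0_map_Suc: "avoids321 (0 # map Suc ys) \<longleftrightarrow> avoids321 ys"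
  using avoids321_Cons_min[of "map Suc ys" 0] avoids321_map[of ys Suc] by simp

lemma av321_first_min: "{xs \<in> av321 (Suc m). hd xs = 0} = (\<lambda>ys. 0 # map Suc ys) ` av321 m"
proof (intro equalityI subsetI)
  fix xs assume "xs \<in> {xs \<in> av321 (Suc m). hd xs = 0}"
  then have perm: "xs \<in> perm_lists (Suc m)" and av: "avoids321 xs" and hd: "hd xs = 0"
    by (auto simp: av321_def)
  have "xs \<noteq> []"
    using length_perm_lists[OF perm] by auto
  then have xs: "xs = 0 # tl xs"
    using hd by (cases xs) auto
  have "0 \<notin> set (tl xs)"
    using perm xs by (metis distinct.simps(2) perm_lists_def mem_Collect_eq)
  then have "Suc (x - 1) = x" if "x \<in> set (tl xs)" for x
    using that by (cases x) auto
  then have "map Suc (map (\<lambda>v. v - 1) (tl xs)) = tl xs"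
    unfolding map_map by (intro map_idI) simp
  then have "xs = 0 # map Suc (map (\<lambda>v. v - 1) (tl xs))"
    using xs by simp
  moreover from this have "map (\<lambda>v. v - 1) (tl xs) \<in> av321 m"
    using perm av Cons_0_map_Suc_perm_lists avoids321_Cons_0_map_Suc by (metis av321_def mem_Collect_eq)
  ultimately show "xs \<in> (\<lambda>ys. 0 # map Suc ys) ` av321 m"
    by blast
next
  fix xs assume "xs \<in> (\<lambda>ys. 0 # map Suc ys) ` av321 m"
  then show "xs \<in> {xs \<in> av321 (Suc m). hd xs = 0}"
    using Cons_0_map_Suc_perm_lists avoids321_Cons_0_map_Suc by (auto simp: av321_def)
qed

definition av321_last_nonmax :: "nat \<Rightarrow> nat list set" where
  "av321_last_nonmax n = {xs \<in> av321 n. last xs \<noteq> n - 1}"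

definition av321_first_nonmin :: "nat \<Rightarrow> nat list set" where
  "av321_first_nonmin n = {xs \<in> av321 n. hd xs \<noteq> 0}"

lemma ballot_1_Suc_Suc: "ballot 1 (Suc (Suc j)) = ballot 1 (Suc j) + ballot 3 j"
  using ballot_Suc_Suc[of 0 "Suc j"] ballot_Suc_Suc[of 1 j] by (simp add: numeral_eq_Suc)

lemma card_av321_last_nonmax: "card (av321_last_nonmax (Suc (Suc j))) = ballot 3 j"
proof -
  have "card (av321 (Suc (Suc j)))
      = card (av321_last_nonmax (Suc (Suc j))) + card {xs \<in> av321 (Suc (Suc j)). last xs = Suc j}"
    unfolding av321_last_nonmax_def diff_Suc_1 by (rule card_filter_split[OF finite_av321])
  also have "card {xs \<in> av321 (Suc (Suc j)). last xs = Suc j} = card (av321 (Suc j))"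
    unfolding av321_last_max by (rule card_image) (simp add: inj_on_def)
  finally show ?thesis
    using card_av321 ballot_1_Suc_Suc by simp
qed

lemma card_av321_first_nonmin: "card (av321_first_nonmin (Suc (Suc j))) = ballot 3 j"
proof -
  have "card (av321 (Suc (Suc j)))
      = card (av321_first_nonmin (Suc (Suc j))) + card {xs \<in> av321 (Suc (Suc j)). hd xs = 0}"
    unfolding av321_first_nonmin_def by (rule card_filter_split[OF finite_av321])
  also have "card {xs \<in> av321 (Suc (Suc j)). hd xs = 0} = card (av321 (Suc j))"
    unfolding av321_first_min by (rule card_image) (simp add: inj_on_def)
  finally show ?thesis
    using card_av321 ballot_1_Suc_Suc by simp
qed

section \<open>Gluing two avoiders\<close>

text \<open>Inverse of cutting a list with a unique 321 \<open>(c, s, a)\<close> at its middle entry \<open>s\<close>: \<open>c\<close> is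
  stored as \<open>hd r + s\<close> in place of the maximum \<open>s\<close> of \<open>l\<close>, and \<open>a\<close> as \<open>last l\<close> in place of the
  minimum \<open>0\<close> of \<open>r\<close>.\<close>

definition glue :: "nat \<Rightarrow> nat list \<Rightarrow> nat list \<Rightarrow> nat list" where
  "glue s l r = map (\<lambda>v. if v = s then hd r + s else v) (butlast l) @ s #
               map (\<lambda>v. if v = 0 then last l else v + s) (tl r)"

lemma length_glue:
  "length l = Suc s \<Longrightarrow> length r = n - s \<Longrightarrow> s < n \<Longrightarrow> length (glue s l r) = n"
  unfolding glue_def by simp

lemma glue_nth:
  assumes "length l = Suc s" "length r = n - s" "s < n" "t < n"
  shows "glue s l r ! t = (if t < s then (if l ! t = s then hd r + s else l ! t)
                          else if t = s then s
                          else if r ! (t - s) = 0 then last l else r ! (t - s) + s)"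
  using assms by (auto simp: glue_def nth_append_Cons nth_butlast nth_tl Suc_diff_Suc)

context
  fixes n s i0 j0 :: nat and l r :: "nat list"
  assumes s_bounds: "1 \<le> s" "s + 2 \<le> n"
    and l: "l \<in> av321_last_nonmax (Suc s)" and l_i0: "i0 < Suc s" "l ! i0 = s"
    and r: "r \<in> av321_first_nonmin (n - s)" and r_j0: "j0 < n - s" "r ! j0 = 0"
begin

lemma glue_components:
  shows length_l: "length l = Suc s" and length_r: "length r = n - s"
    and l_nth_le: "\<And>t. t < Suc s \<Longrightarrow> l ! t \<le> s"
    and l_nth_inj: "\<And>t u. t < Suc s \<Longrightarrow> u < Suc s \<Longrightarrow> l ! t = l ! u \<Longrightarrow> t = u"
    and r_nth_less: "\<And>t. t < n - s \<Longrightarrow> r ! t < n - s"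
    and r_nth_inj: "\<And>t u. t < n - s \<Longrightarrow> u < n - s \<Longrightarrow> r ! t = r ! u \<Longrightarrow> t = u"
    and l_s: "l ! s = last l" and last_l_less: "last l < s" and i0_less: "i0 < s"
    and r_0: "r ! 0 = hd r" and hd_r: "0 < hd r" "hd r < n - s" and j0_pos: "0 < j0"
proof -
  have perm_l: "l \<in> perm_lists (Suc s)" and last_l: "last l \<noteq> s"
    using l by (auto simp: av321_last_nonmax_def av321_def)
  have perm_r: "r \<in> perm_lists (n - s)" and hd_r0: "hd r \<noteq> 0"
    using r by (auto simp: av321_first_nonmin_def av321_def)
  show len_l: "length l = Suc s" and len_r: "length r = n - s"
    using perm_l perm_r by (simp_all add: length_perm_lists)
  show "l ! t \<le> s" if "t < Suc s" for t
    using that perm_l len_l nth_mem[of t l] by (auto simp: perm_lists_def)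
  show "l ! t = l ! u \<Longrightarrow> t = u" if "t < Suc s" "u < Suc s" for t u
    using that perm_l len_l by (simp add: perm_lists_def nth_eq_iff_index_eq)
  show "r ! t < n - s" if "t < n - s" for t
    using that perm_r len_r nth_mem[of t r] by (auto simp: perm_lists_def)
  show "r ! t = r ! u \<Longrightarrow> t = u" if "t < n - s" "u < n - s" for t u
    using that perm_r len_r by (simp add: perm_lists_def nth_eq_iff_index_eq)
  have "l \<noteq> []"
    using len_l by auto
  then show l_s: "l ! s = last l"
    using len_l by (simp add: last_conv_nth)
  have "last l \<in> set l"
    using len_l by (intro last_in_set) auto
  then show last_less: "last l < s"
    using perm_l last_l by (auto simp: perm_lists_def)
  show "i0 < s"
    using l_i0 l_s last_less by (auto simp: less_Suc_eq)
  have "r \<noteq> []"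
    using len_r s_bounds by auto
  then show r_0: "r ! 0 = hd r"
    by (simp add: hd_conv_nth)
  have "hd r \<in> set r"
    using len_r s_bounds by (intro hd_in_set) auto
  then show "0 < hd r" "hd r < n - s"
    using perm_r hd_r0 by (auto simp: perm_lists_def)
  show "0 < j0"
    using r_j0 r_0 hd_r0 by (auto intro: gr0I)
qed

lemma glue_left:
  assumes "t < s" "t \<noteq> i0"
  shows "glue s l r ! t = l ! t" "l ! t < s" "l ! t \<noteq> last l"
proof -
  have "l ! t \<noteq> s" "l ! t \<noteq> last l"
    using l_nth_inj[of t i0] l_nth_inj[of t s] l_i0 l_s assms by auto
  then show "glue s l r ! t = l ! t" "l ! t < s" "l ! t \<noteq> last l"
    using glue_nth[OF length_l length_r, of t] assms s_bounds l_nth_le[of t] by auto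
qed

lemma glue_i0: "glue s l r ! i0 = hd r + s"
  using glue_nth[OF length_l length_r, of i0] i0_less l_i0 s_bounds by simp

lemma glue_s: "glue s l r ! s = s"
  using glue_nth[OF length_l length_r, of s] s_bounds by simp

lemma glue_right:
  assumes "s < t" "t < n" "t \<noteq> s + j0"
  shows "glue s l r ! t = r ! (t - s) + s" "0 < r ! (t - s)" "r ! (t - s) \<noteq> hd r"
    "r ! (t - s) < n - s"
proof -
  have t: "t - s < n - s" "t - s \<noteq> j0" "t - s \<noteq> 0"
    using assms by auto
  then show "0 < r ! (t - s)" "r ! (t - s) \<noteq> hd r"
    using r_nth_inj[of "t - s" j0] r_nth_inj[of "t - s" 0] r_j0 r_0 s_bounds by auto
  then show "glue s l r ! t = r ! (t - s) + s"
    using glue_nth[OF length_l length_r, of t] assms by auto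
  show "r ! (t - s) < n - s"
    using r_nth_less t by simp
qed

lemma glue_j0: "glue s l r ! (s + j0) = last l"
  using glue_nth[OF length_l length_r, of "s + j0"] j0_pos r_j0 by simp

lemma glue_cases:
  "t < n \<Longrightarrow> (t < s \<and> t \<noteq> i0) \<or> t = i0 \<or> t = s \<or> (s < t \<and> t \<noteq> s + j0) \<or> t = s + j0"
  using i0_less by auto

lemma glue_perm_lists: "glue s l r \<in> perm_lists n"
proof (rule perm_listsI)
  have len: "length (glue s l r) = n"
    using length_glue[OF length_l length_r] s_bounds by simp
  then show "length (glue s l r) = n" .
  have lt: "t - s < n - s" if "s < t" "t < n" for t
    using that by linarith
  show "distinct (glue s l r)"
    unfolding distinct_conv_nth
  proof (intro allI impI)
    fix i j assume "i < length (glue s l r)" "j < length (glue s l r)" "i \<noteq> j"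
    then have i: "i < n" and j: "j < n" and ij: "i \<noteq> j"
      using len by auto
    show "glue s l r ! i \<noteq> glue s l r ! j"
      using glue_cases[OF i] glue_cases[OF j]
    proof (elim disjE conjE)
    qed (use ij i j glue_left[of i] glue_left[of j] glue_i0 glue_s glue_right[of i] glue_right[of j]
        glue_j0 hd_r last_l_less l_nth_inj[of i j] r_nth_inj[of "i - s" "j - s"] i0_less lt[of i] lt[of j]
        in auto)
  qed
  have "glue s l r ! t < n" if "t < n" for t
    using glue_cases[OF that] glue_left[of t] glue_i0 glue_s glue_right[of t] glue_j0 hd_r last_l_less
      s_bounds that by auto
  then show "\<forall>x\<in>set (glue s l r). x < n"
    using len by (auto simp: in_set_conv_nth)
qed

lemma glue_left_less_iff:
  "t < s \<Longrightarrow> u < s \<Longrightarrow> glue s l r ! t < glue s l r ! u \<longleftrightarrow> l ! t < l ! u"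
  using glue_left[of t] glue_left[of u] glue_i0 l_i0 hd_r l_nth_le[of t] l_nth_le[of u]
  by (cases "t = i0"; cases "u = i0") auto

lemma glue_left_less_last_iff:
  "t < s \<Longrightarrow> last l < glue s l r ! t \<longleftrightarrow> last l < l ! t"
  using glue_left[of t] glue_i0 l_i0 hd_r last_l_less by (cases "t = i0") auto

lemma glue_right_less_iff:
  "s < t \<Longrightarrow> t < n \<Longrightarrow> s < u \<Longrightarrow> u < n \<Longrightarrow>
    glue s l r ! t < glue s l r ! u \<longleftrightarrow> r ! (t - s) < r ! (u - s)"
  using glue_right[of t] glue_right[of u] glue_j0 r_j0 last_l_less
  by (cases "t = s + j0"; cases "u = s + j0") auto

lemma glue_right_less_i0_iff:
  "s < t \<Longrightarrow> t < n \<Longrightarrow> glue s l r ! t < hd r + s \<longleftrightarrow> r ! (t - s) < r ! 0"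
  using glue_right[of t] glue_j0 r_j0 r_0 hd_r last_l_less by (cases "t = s + j0") auto

lemma glue_no_middle_left:
  assumes occ: "(i, j, k) \<in> occs321 (glue s l r)" and "j < s"
  shows False
proof -
  have ij: "i < j" and jk: "j < k" and kn: "k < n"
    and c1: "glue s l r ! j < glue s l r ! i" and c2: "glue s l r ! k < glue s l r ! j"
    using occ length_glue[OF length_l length_r] s_bounds by (auto simp: occs321_def)
  have av: "\<not> (l ! j < l ! i' \<and> l ! k' < l ! j)" if "i' < j" "j < k'" "k' < Suc s" for i' k'
    using l that length_l unfolding av321_last_nonmax_def av321_def avoids321_iff by auto
  show False
  proof (cases "j = i0")
    case True
    then show ?thesis
      using glue_left[of i] glue_i0 c1 ij i0_less hd_r by auto
  next
    case False
    have gj: "glue s l r ! j = l ! j" "l ! j < s"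
      using glue_left[of j] False \<open>j < s\<close> by auto
    have li: "l ! j < l ! i"
      using glue_left_less_iff[of j i] ij \<open>j < s\<close> c1 by simp
    consider "k < s" | "k = s" | "s < k" "k = s + j0" | "s < k" "k \<noteq> s + j0"
      by linarith
    then show False
    proof cases
      case 1
      then show ?thesis
        using glue_left_less_iff[of k j] \<open>j < s\<close> c2 av[of i k] ij jk li by simp
    next
      case 2
      then show ?thesis using c2 glue_s gj by simp
    next
      case 3
      then show ?thesis
        using c2 glue_j0 glue_left_less_last_iff[of j] \<open>j < s\<close> av[of i s] ij li l_s by simp
    next
      case 4
      then show ?thesis using c2 glue_right[of k] gj kn by simp
    qed
  qed
qed

lemma glue_no_middle_right:
  assumes occ: "(i, j, k) \<in> occs321 (glue s l r)" and "s < j"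
  shows False
proof -
  have ij: "i < j" and jk: "j < k" and kn: "k < n"
    and c1: "glue s l r ! j < glue s l r ! i" and c2: "glue s l r ! k < glue s l r ! j"
    using occ length_glue[OF length_l length_r] s_bounds by (auto simp: occs321_def)
  have "j - s < k - s" "k - s < length r"
    using \<open>s < j\<close> jk kn length_r by linarith+
  then have av: "\<not> (r ! (j - s) < r ! i' \<and> r ! (k - s) < r ! (j - s))" if "i' < j - s" for i'
    using r that unfolding av321_first_nonmin_def av321_def avoids321_iff by blast
  show False
  proof (cases "j = s + j0")
    case True
    then show ?thesis
      using c2 glue_j0 glue_right[of k] jk kn last_l_less by (cases "k = s + j0") auto
  next
    case False
    have gj: "glue s l r ! j = r ! (j - s) + s"
      using glue_right[of j] \<open>s < j\<close> jk kn False by simp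
    have rk: "r ! (k - s) < r ! (j - s)"
      using glue_right_less_iff[of k j] c2 \<open>s < j\<close> jk kn by simp
    consider "i < s" | "i = s" | "s < i"
      by linarith
    then show False
    proof cases
      case 1
      then have "i = i0"
        using c1 gj glue_left[of i] by (cases "i = i0") auto
      then have "r ! (j - s) < r ! 0"
        using glue_right_less_i0_iff[of j] c1 glue_i0 \<open>s < j\<close> jk kn by simp
      then show ?thesis
        using av[of 0] rk \<open>s < j\<close> by simp
    next
      case 2
      then show ?thesis using c1 gj glue_s by simp
    next
      case 3
      have "r ! (j - s) < r ! (i - s)"
        using glue_right_less_iff[of j i] c1 3 ij jk kn by simp
      moreover have "i - s < j - s"
        using 3 ij by linarith
      ultimately show ?thesis
        using av[of "i - s"] rk by simp
    qed
  qed
qed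

lemma glue_occs321: "occs321 (glue s l r) = {(i0, s, s + j0)}"
proof (intro equalityI subsetI)
  fix x assume occ: "x \<in> occs321 (glue s l r)"
  then obtain i j k where x: "x = (i, j, k)"
    by (cases x) auto
  then have "(i, j, k) \<in> occs321 (glue s l r)"
    using occ by simp
  moreover from this have j: "j = s"
    using glue_no_middle_left glue_no_middle_right by (metis linorder_neqE_nat)
  ultimately have ij: "i < s" and jk: "s < k" and kn: "k < n"
    and c1: "s < glue s l r ! i" and c2: "glue s l r ! k < s"
    using length_glue[OF length_l length_r] s_bounds glue_s by (auto simp: occs321_def)
  have "i = i0"
    using c1 ij glue_left[of i] by (cases "i = i0") auto
  moreover have "k = s + j0"
    using c2 jk kn glue_right[of k] by (cases "k = s + j0") auto
  ultimately show "x \<in> {(i0, s, s + j0)}"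
    using x j by simp
next
  fix x assume "x \<in> {(i0, s, s + j0)}"
  then show "x \<in> occs321 (glue s l r)"
    using i0_less j0_pos r_j0 glue_i0 glue_s glue_j0 hd_r last_l_less length_glue[OF length_l length_r]
    by (auto simp: occs321_def)
qed

lemma l_eq_glue: "t < s \<Longrightarrow> l ! t = (if glue s l r ! t = hd r + s then s else glue s l r ! t)"
  using glue_left[of t] glue_i0 l_i0 by (cases "t = i0") auto

lemma r_eq_glue:
  "0 < t \<Longrightarrow> t < n - s \<Longrightarrow> r ! t = (if glue s l r ! (s + t) = last l then 0 else glue s l r ! (s + t) - s)"
  using glue_right[of "s + t"] glue_j0 r_j0 last_l_less by (cases "t = j0") auto

end

definition glue_domain :: "nat \<Rightarrow> (nat \<times> nat list \<times> nat list) set" where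
  "glue_domain n = (SIGMA s:{1..n - 2}. av321_last_nonmax (Suc s) \<times> av321_first_nonmin (n - s))"

lemma glue_domain_positions:
  assumes "(s, l, r) \<in> glue_domain n"
  obtains i0 j0 where "1 \<le> s" "s + 2 \<le> n" "l \<in> av321_last_nonmax (Suc s)" "i0 < Suc s" "l ! i0 = s"
    "r \<in> av321_first_nonmin (n - s)" "j0 < n - s" "r ! j0 = 0"
proof -
  have s: "1 \<le> s" "s + 2 \<le> n" and l: "l \<in> av321_last_nonmax (Suc s)"
    and r: "r \<in> av321_first_nonmin (n - s)"
    using assms by (auto simp: glue_domain_def)
  have "l \<in> perm_lists (Suc s)" "r \<in> perm_lists (n - s)"
    using l r by (simp_all add: av321_last_nonmax_def av321_first_nonmin_def av321_def)
  then have "s \<in> set l" "0 \<in> set r" "length l = Suc s" "length r = n - s"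
    using s by (auto simp: perm_lists_def length_perm_lists)
  then obtain i0 j0 where "i0 < Suc s" "l ! i0 = s" "j0 < n - s" "r ! j0 = 0"
    by (metis in_set_conv_nth)
  then show thesis
    using that s l r by blast
qed

lemma glue_injective:
  assumes dom: "(s, l, r) \<in> glue_domain n" and dom': "(s', l', r') \<in> glue_domain n"
    and eq: "glue s l r = glue s' l' r'"
  shows "(s, l, r) = (s', l', r')"
proof -
  obtain i0 j0 where h: "1 \<le> s" "s + 2 \<le> n" "l \<in> av321_last_nonmax (Suc s)" "i0 < Suc s" "l ! i0 = s"
      "r \<in> av321_first_nonmin (n - s)" "j0 < n - s" "r ! j0 = 0"
    using dom by (rule glue_domain_positions)
  obtain i0' j0' where h': "1 \<le> s'" "s' + 2 \<le> n" "l' \<in> av321_last_nonmax (Suc s')" "i0' < Suc s'"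
      "l' ! i0' = s'" "r' \<in> av321_first_nonmin (n - s')" "j0' < n - s'" "r' ! j0' = 0"
    using dom' by (rule glue_domain_positions)
  have "{(i0, s, s + j0)} = {(i0', s', s' + j0')}"
    using glue_occs321[OF h] glue_occs321[OF h'] eq by simp
  then have same: "s' = s" "i0' = i0" "j0' = j0"
    by auto
  have hd: "hd r' = hd r" and last: "last l' = last l"
    using glue_i0[OF h] glue_i0[OF h'] glue_j0[OF h] glue_j0[OF h'] eq same by simp_all
  note h' = h'[unfolded same] and eq = eq[unfolded same]
  have "l = l'"
  proof (rule nth_equalityI)
    show "length l = length l'"
      using length_l[OF h] length_l[OF h'] by simp
    fix t assume "t < length l"
    then consider "t < s" | "t = s"
      using length_l[OF h] by linarith
    then show "l ! t = l' ! t"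
      by cases (use l_eq_glue[OF h] l_eq_glue[OF h'] l_s[OF h] l_s[OF h'] eq hd last in auto)
  qed
  moreover have "r = r'"
  proof (rule nth_equalityI)
    show "length r = length r'"
      using length_r[OF h] length_r[OF h'] by simp
    fix t assume "t < length r"
    then have "t < n - s"
      using length_r[OF h] by simp
    then show "r ! t = r' ! t"
      using r_eq_glue[OF h, of t] r_eq_glue[OF h', of t] r_0[OF h] r_0[OF h'] eq hd last
      by (cases "t = 0") auto
  qed
  ultimately show ?thesis
    using same by simp
qed

lemma inj_on_glue: "inj_on (\<lambda>(s, l, r). glue s l r) (glue_domain n)"
  unfolding inj_on_def using glue_injective by fast

section \<open>Cutting a list with a unique 321\<close>

definition left_part :: "nat \<Rightarrow> nat \<Rightarrow> nat \<Rightarrow> nat list \<Rightarrow> nat list" where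
  "left_part s i0 k0 xs = map (\<lambda>v. if v = xs ! i0 then s else v) (take s xs) @ [xs ! k0]"

definition right_part :: "nat \<Rightarrow> nat \<Rightarrow> nat \<Rightarrow> nat list \<Rightarrow> nat list" where
  "right_part s i0 k0 xs = (xs ! i0 - s) # map (\<lambda>v. if v = xs ! k0 then 0 else v - s) (drop (Suc s) xs)"

context
  fixes n i0 s k0 :: nat and xs :: "nat list"
  assumes xs: "xs \<in> perm_lists n" and unique: "occs321 xs = {(i0, s, k0)}"
begin

lemma unique_occ:
  shows i0_less_s: "i0 < s" and s_less_k0: "s < k0" and k0_less: "k0 < n"
    and middle_less_i0: "xs ! s < xs ! i0" and k0_less_middle: "xs ! k0 < xs ! s"
    and length_xs: "length xs = n"
    and xs_nth_less: "\<And>t. t < n \<Longrightarrow> xs ! t < n"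
    and xs_nth_inj: "\<And>t u. t < n \<Longrightarrow> u < n \<Longrightarrow> xs ! t = xs ! u \<Longrightarrow> t = u"
proof -
  show len: "length xs = n"
    using xs by (rule length_perm_lists)
  have "(i0, s, k0) \<in> occs321 xs"
    using unique by simp
  then show "i0 < s" "s < k0" "k0 < n" "xs ! s < xs ! i0" "xs ! k0 < xs ! s"
    using len by (auto simp: occs321_def)
  show "xs ! t < n" if "t < n" for t
    using xs len that nth_mem[of t xs] by (auto simp: perm_lists_def)
  show "xs ! t = xs ! u \<Longrightarrow> t = u" if "t < n" "u < n" for t u
    using xs len that by (simp add: perm_lists_def nth_eq_iff_index_eq)
qed

lemma occ_eq_unique_occ:
  "i < j \<Longrightarrow> j < k \<Longrightarrow> k < n \<Longrightarrow> xs ! j < xs ! i \<Longrightarrow> xs ! k < xs ! j \<Longrightarrow> i = i0 \<and> j = s \<and> k = k0"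
  using unique length_xs by (auto simp: occs321_def set_eq_iff)

lemma left_below_middle:
  assumes "t < s" "t \<noteq> i0"
  shows "xs ! t < xs ! s"
proof (rule ccontr)
  have "xs ! t \<noteq> xs ! s"
    using xs_nth_inj[of t s] assms s_less_k0 k0_less by auto
  moreover assume "\<not> xs ! t < xs ! s"
  ultimately show False
    using occ_eq_unique_occ[of t s k0] assms s_less_k0 k0_less k0_less_middle by auto
qed

lemma right_above_middle:
  assumes "s < t" "t < n" "t \<noteq> k0"
  shows "xs ! s < xs ! t"
proof (rule ccontr)
  have "xs ! t \<noteq> xs ! s"
    using xs_nth_inj[of t s] assms by auto
  moreover assume "\<not> xs ! s < xs ! t"
  ultimately show False
    using occ_eq_unique_occ[of i0 s t] assms i0_less_s middle_less_i0 by auto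
qed

text \<open>The entries below the middle one sit exactly at the positions \<open>{0..<s} - {i0} \<union> {k0}\<close>.\<close>

lemma middle_fixed: "xs ! s = s"
proof -
  define S where "S = ({0..<s} - {i0}) \<union> {k0}"
  have "(\<lambda>t. xs ! t) ` S = {0..<xs ! s}"
  proof (intro equalityI subsetI)
    fix v assume "v \<in> (\<lambda>t. xs ! t) ` S"
    then obtain t where "t \<in> S" "v = xs ! t"
      by blast
    then show "v \<in> {0..<xs ! s}"
      using left_below_middle[of t] k0_less_middle by (cases "t = k0") (auto simp: S_def)
  next
    fix v assume v: "v \<in> {0..<xs ! s}"
    then have "v \<in> set xs"
      using xs xs_nth_less[of s] s_less_k0 k0_less by (auto simp: perm_lists_def)
    then obtain t where t: "t < n" "xs ! t = v"
      using length_xs by (auto simp: in_set_conv_nth)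
    then have "t \<noteq> s" "t \<noteq> i0" "s < t \<longrightarrow> t = k0"
      using v middle_less_i0 right_above_middle[of t] by auto
    then have "t \<in> S"
      by (auto simp: S_def)
    then show "v \<in> (\<lambda>t. xs ! t) ` S"
      using t by blast
  qed
  moreover have "inj_on (\<lambda>t. xs ! t) S"
  proof -
    have "t < n" if "t \<in> S" for t
      using that s_less_k0 k0_less by (auto simp: S_def)
    then show ?thesis
      unfolding inj_on_def using xs_nth_inj by blast
  qed
  ultimately have "card S = xs ! s"
    using card_image by fastforce
  moreover have "card S = s"
    using i0_less_s s_less_k0 by (simp add: S_def)
  ultimately show ?thesis
    by simp
qed

lemma xs_left_less: "t < s \<Longrightarrow> t \<noteq> i0 \<Longrightarrow> xs ! t < s"
  using left_below_middle middle_fixed by simp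

lemma xs_right_greater: "s < t \<Longrightarrow> t < n \<Longrightarrow> t \<noteq> k0 \<Longrightarrow> s < xs ! t"
  using right_above_middle middle_fixed by simp

lemma length_left_part: "length (left_part s i0 k0 xs) = Suc s"
  using length_xs s_less_k0 k0_less by (simp add: left_part_def)

lemma left_part_nth:
  assumes "t < Suc s"
  shows "left_part s i0 k0 xs ! t = (if t = s then xs ! k0 else if t = i0 then s else xs ! t)"
proof -
  have "xs ! t = xs ! i0 \<longleftrightarrow> t = i0" if "t < s"
    using that xs_nth_inj[of t i0] i0_less_s s_less_k0 k0_less by auto
  then show ?thesis
    using assms length_xs s_less_k0 k0_less i0_less_s by (auto simp: left_part_def nth_append)
qed

lemma left_part_le:
  assumes "t < Suc s"
  shows "left_part s i0 k0 xs ! t \<le> s"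
  using left_part_nth[OF assms] xs_left_less[of t] k0_less_middle middle_fixed assms
  by (cases "t = s"; cases "t = i0") auto

lemma xs_at_left_part:
  "t < Suc s \<Longrightarrow> xs ! (if t = s then k0 else t) =
     (if left_part s i0 k0 xs ! t = s then xs ! i0 else left_part s i0 k0 xs ! t)"
  using left_part_nth[of t] xs_left_less[of t] k0_less_middle middle_fixed by auto

lemma left_part_av321: "left_part s i0 k0 xs \<in> av321_last_nonmax (Suc s)"
proof -
  let ?l = "left_part s i0 k0 xs"
  define e where "e t = (if t = s then k0 else t)" for t
  define f where "f v = (if v = s then xs ! i0 else v)" for v
  have xs_e: "xs ! e t = f (?l ! t)" if "t < length ?l" for t
    using xs_at_left_part that length_left_part by (simp add: e_def f_def)
  have e_less: "e t < length xs" if "t < length ?l" for t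
    using that s_less_k0 k0_less length_xs length_left_part by (auto simp: e_def)
  have "distinct ?l"
  proof (rule distinct_embed[of xs ?l e f])
    show "distinct xs"
      using xs by (simp add: perm_lists_def)
    show "inj_on e {..<length ?l}"
      using s_less_k0 length_left_part by (auto simp: inj_on_def e_def split: if_splits)
  qed (use xs_e e_less in auto)
  then have perm: "?l \<in> perm_lists (Suc s)"
    using left_part_le length_left_part by (intro perm_listsI) (auto simp: in_set_conv_nth less_Suc_eq_le)
  have "avoids321 ?l"
  proof (rule avoids321_embed_unique_occ[OF unique])
    show "e u < e v" if "u < v" "v < length ?l" for u v
      using that s_less_k0 length_left_part by (auto simp: e_def)
    show "xs ! e u < xs ! e v" if "u < length ?l" "v < length ?l" "?l ! u < ?l ! v" for u v
      using that xs_e[of u] xs_e[of v] left_part_le[of u] left_part_le[of v] length_left_part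
        middle_less_i0 middle_fixed by (auto simp: f_def)
    show "e u \<noteq> s" if "u < length ?l" for u
      using s_less_k0 by (simp add: e_def)
  qed (rule e_less)
  moreover have "last ?l \<noteq> s"
    using k0_less_middle middle_fixed by (simp add: left_part_def)
  ultimately show ?thesis
    using perm by (simp add: av321_last_nonmax_def av321_def)
qed

lemma length_right_part: "length (right_part s i0 k0 xs) = n - s"
  using length_xs s_less_k0 k0_less by (simp add: right_part_def)

lemma right_part_nth:
  assumes "t < n - s"
  shows "right_part s i0 k0 xs ! t =
    (if t = 0 then xs ! i0 - s else if s + t = k0 then 0 else xs ! (s + t) - s)"
proof (cases t)
  case (Suc u)
  have "xs ! (s + t) = xs ! k0 \<longleftrightarrow> s + t = k0"
    using assms xs_nth_inj[of "s + t" k0] k0_less by auto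
  then show ?thesis
    using assms Suc length_xs by (simp add: right_part_def)
qed (simp add: right_part_def)

lemma xs_at_right_part:
  assumes "t < n - s"
  shows "xs ! (if t = 0 then i0 else s + t) =
    (if right_part s i0 k0 xs ! t = 0 then xs ! k0 else right_part s i0 k0 xs ! t + s)"
proof -
  have "s + t < n"
    using assms by linarith
  then show ?thesis
    using right_part_nth[OF assms] xs_right_greater[of "s + t"] middle_less_i0 middle_fixed
    by auto
qed

lemma right_part_less:
  assumes "t < n - s"
  shows "right_part s i0 k0 xs ! t < n - s"
proof -
  have "s + t < n"
    using assms by linarith
  then show ?thesis
    using right_part_nth[OF assms] xs_nth_less[of i0] xs_nth_less[of "s + t"] i0_less_s s_less_k0
      k0_less middle_less_i0 middle_fixed assms by auto
qed

lemma right_part_av321: "right_part s i0 k0 xs \<in> av321_first_nonmin (n - s)"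
proof -
  let ?r = "right_part s i0 k0 xs"
  define e where "e t = (if t = 0 then i0 else s + t)" for t
  define f where "f v = (if v = 0 then xs ! k0 else v + s)" for v
  have xs_e: "xs ! e t = f (?r ! t)" if "t < length ?r" for t
    using xs_at_right_part that length_right_part by (simp add: e_def f_def)
  have e_less: "e t < length xs" if "t < length ?r" for t
    using that i0_less_s s_less_k0 k0_less length_xs length_right_part by (auto simp: e_def)
  have "distinct ?r"
  proof (rule distinct_embed[of xs ?r e f])
    show "distinct xs"
      using xs by (simp add: perm_lists_def)
    show "inj_on e {..<length ?r}"
      using i0_less_s by (auto simp: inj_on_def e_def split: if_splits)
  qed (use xs_e e_less in auto)
  then have perm: "?r \<in> perm_lists (n - s)"
    using right_part_less length_right_part by (intro perm_listsI) (auto simp: in_set_conv_nth)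
  have "avoids321 ?r"
  proof (rule avoids321_embed_unique_occ[OF unique])
    show "e u < e v" if "u < v" "v < length ?r" for u v
      using that i0_less_s by (auto simp: e_def)
    show "xs ! e u < xs ! e v" if "u < length ?r" "v < length ?r" "?r ! u < ?r ! v" for u v
      using that xs_e k0_less_middle middle_fixed by (auto simp: f_def)
    show "e u \<noteq> s" if "u < length ?r" for u
      using i0_less_s by (simp add: e_def)
  qed (rule e_less)
  moreover have "hd ?r \<noteq> 0"
    using middle_less_i0 middle_fixed by (simp add: right_part_def)
  ultimately show ?thesis
    using perm by (simp add: av321_first_nonmin_def av321_def)
qed

lemma glue_left_right_part: "glue s (left_part s i0 k0 xs) (right_part s i0 k0 xs) = xs"
proof (rule nth_equalityI)
  have "s < n"
    using s_less_k0 k0_less by simp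
  then show len: "length (glue s (left_part s i0 k0 xs) (right_part s i0 k0 xs)) = length xs"
    using length_glue[OF length_left_part length_right_part] length_xs by simp
  fix t assume "t < length (glue s (left_part s i0 k0 xs) (right_part s i0 k0 xs))"
  then have t: "t < n"
    using len length_xs by simp
  have hd: "hd (right_part s i0 k0 xs) = xs ! i0 - s" and last: "last (left_part s i0 k0 xs) = xs ! k0"
    by (simp_all add: right_part_def left_part_def)
  consider "t < s" | "t = s" | "s < t"
    by linarith
  then show "glue s (left_part s i0 k0 xs) (right_part s i0 k0 xs) ! t = xs ! t"
  proof cases
    case 1
    then show ?thesis
      using glue_nth[OF length_left_part length_right_part \<open>s < n\<close> t] left_part_nth[of t] hd
        xs_left_less[of t] middle_less_i0 middle_fixed by auto
  next
    case 2
    then show ?thesis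
      using glue_nth[OF length_left_part length_right_part \<open>s < n\<close> t] middle_fixed by simp
  next
    case 3
    then have "t - s < n - s" "0 < t - s"
      using t by auto
    then show ?thesis
      using glue_nth[OF length_left_part length_right_part \<open>s < n\<close> t] right_part_nth[of "t - s"] last
        xs_right_greater[of t] 3 t by auto
  qed
qed

end

section \<open>Permutations with a unique 321\<close>

definition one321 :: "nat \<Rightarrow> nat list set" where
  "one321 n = {xs \<in> perm_lists n. card (occs321 xs) = 1}"

lemma glue_image_one321: "(\<lambda>(s, l, r). glue s l r) ` glue_domain n = one321 n"
proof (intro equalityI subsetI)
  fix xs assume "xs \<in> (\<lambda>(s, l, r). glue s l r) ` glue_domain n"
  then obtain s l r where dom: "(s, l, r) \<in> glue_domain n" and xs: "xs = glue s l r"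
    by auto
  obtain i0 j0 where h: "1 \<le> s" "s + 2 \<le> n" "l \<in> av321_last_nonmax (Suc s)" "i0 < Suc s" "l ! i0 = s"
      "r \<in> av321_first_nonmin (n - s)" "j0 < n - s" "r ! j0 = 0"
    using dom by (rule glue_domain_positions)
  show "xs \<in> one321 n"
    using glue_perm_lists[OF h] glue_occs321[OF h] xs by (simp add: one321_def)
next
  fix xs assume "xs \<in> one321 n"
  then have perm: "xs \<in> perm_lists n" and "card (occs321 xs) = 1"
    by (auto simp: one321_def)
  then obtain i0 s k0 where unique: "occs321 xs = {(i0, s, k0)}"
    by (metis card_1_singletonE prod_cases3)
  have "1 \<le> s" "s + 2 \<le> n"
    using i0_less_s[OF perm unique] s_less_k0[OF perm unique] k0_less[OF perm unique] by auto
  then have "(s, left_part s i0 k0 xs, right_part s i0 k0 xs) \<in> glue_domain n"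
    using left_part_av321[OF perm unique] right_part_av321[OF perm unique]
    by (auto simp: glue_domain_def)
  then show "xs \<in> (\<lambda>(s, l, r). glue s l r) ` glue_domain n"
    using glue_left_right_part[OF perm unique] by force
qed

lemma card_one321:
  "card (one321 n) = (\<Sum>s = 1..n - 2. card (av321_last_nonmax (Suc s)) * card (av321_first_nonmin (n - s)))"
proof -
  have "card (one321 n) = card (glue_domain n)"
    using card_image[OF inj_on_glue] glue_image_one321 by metis
  also have "\<dots> = (\<Sum>s = 1..n - 2. card (av321_last_nonmax (Suc s) \<times> av321_first_nonmin (n - s)))"
    unfolding glue_domain_def
    by (rule card_SigmaI) (auto simp: av321_last_nonmax_def av321_first_nonmin_def finite_av321)
  finally show ?thesis
    by (simp add: card_cartesian_product)
qed

lemma card_one321_ballot: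
  assumes "3 \<le> n"
  shows "card (one321 n) = ballot 6 (n - 3)"
proof -
  obtain m where n: "n = m + 3"
    using assms by (metis add.commute le_Suc_ex)
  have "card (one321 n)
      = (\<Sum>s = Suc 0..Suc m. card (av321_last_nonmax (Suc s)) * card (av321_first_nonmin (n - s)))"
    using card_one321[of n] n by (simp add: numeral_3_eq_3)
  also have "\<dots> = (\<Sum>i = 0..m. card (av321_last_nonmax (Suc (Suc i))) * card (av321_first_nonmin (n - Suc i)))"
    by (rule sum.shift_bounds_cl_Suc_ivl)
  also have "\<dots> = (\<Sum>i = 0..m. ballot 3 i * ballot 3 (m - i))"
  proof (rule sum.cong)
    fix i assume "i \<in> {0..m}"
    then have "n - Suc i = Suc (Suc (m - i))"
      using n by auto
    then show "card (av321_last_nonmax (Suc (Suc i))) * card (av321_first_nonmin (n - Suc i))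
        = ballot 3 i * ballot 3 (m - i)"
      using card_av321_last_nonmax[of i] card_av321_first_nonmin[of "m - i"] by simp
  qed simp
  also have "\<dots> = ballot 6 m"
    using ballot_add[of 3 3 m] by simp
  finally show ?thesis
    using n by simp
qed

definition perm_list :: "nat \<Rightarrow> (nat \<Rightarrow> nat) \<Rightarrow> nat list" where
  "perm_list n p = map (\<lambda>i. p (Suc i) - 1) [0..<n]"

lemma length_perm_list [simp]: "length (perm_list n p) = n"
  by (simp add: perm_list_def)

lemma perm_list_nth [simp]: "i < n \<Longrightarrow> perm_list n p ! i = p (Suc i) - 1"
  by (simp add: perm_list_def)

lemma permutes_atLeastAtMost_range: "p permutes {1..n} \<Longrightarrow> i < n \<Longrightarrow> 1 \<le> p (Suc i) \<and> p (Suc i) \<le> n"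
  using permutes_in_image[of p "{1..n}" "Suc i"] by simp

lemma perm_list_perm_lists:
  assumes p: "p permutes {1..n}"
  shows "perm_list n p \<in> perm_lists n"
proof (rule perm_listsI)
  show "distinct (perm_list n p)"
    unfolding distinct_conv_nth
  proof (intro allI impI)
    fix i j assume "i < length (perm_list n p)" "j < length (perm_list n p)" "i \<noteq> j"
    then have i: "i < n" and j: "j < n" and "p (Suc i) \<noteq> p (Suc j)"
      using permutes_inj[OF p] by (auto simp: inj_eq)
    then have "p (Suc i) - 1 \<noteq> p (Suc j) - 1"
      using permutes_atLeastAtMost_range[OF p i] permutes_atLeastAtMost_range[OF p j] by arith
    then show "perm_list n p ! i \<noteq> perm_list n p ! j"
      using i j by simp
  qed
  have "p (Suc i) - 1 < n" if "i < n" for i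
    using permutes_atLeastAtMost_range[OF p that] by arith
  then show "\<forall>x\<in>set (perm_list n p). x < n"
    by (auto simp: in_set_conv_nth)
qed simp

lemma card_occ321_perm_list:
  assumes p: "p permutes {1..n}"
  shows "card (occ321 n p) = card (occs321 (perm_list n p))"
proof -
  let ?g = "\<lambda>(i, j, k). (Suc i, Suc j, Suc k)"
  have less_iff: "perm_list n p ! i < perm_list n p ! j \<longleftrightarrow> p (Suc i) < p (Suc j)" if "i < n" "j < n" for i j
    using that permutes_atLeastAtMost_range[OF p, of i] permutes_atLeastAtMost_range[OF p, of j] by auto
  have "occ321 n p = ?g ` occs321 (perm_list n p)"
  proof (intro equalityI subsetI)
    fix x assume "x \<in> occ321 n p"
    then obtain i j k where x: "x = (i, j, k)" "1 \<le> i" "i < j" "j < k" "k \<le> n" "p j < p i" "p k < p j"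
      unfolding occ321_def by auto
    then have "(i - 1, j - 1, k - 1) \<in> occs321 (perm_list n p)"
      using less_iff[of "j - 1" "i - 1"] less_iff[of "k - 1" "j - 1"] by (auto simp: occs321_def)
    moreover have "x = ?g (i - 1, j - 1, k - 1)"
      using x by auto
    ultimately show "x \<in> ?g ` occs321 (perm_list n p)"
      by blast
  next
    fix x assume "x \<in> ?g ` occs321 (perm_list n p)"
    then obtain i j k where x: "x = (Suc i, Suc j, Suc k)" and "(i, j, k) \<in> occs321 (perm_list n p)"
      by auto
    then have "i < j" "j < k" "k < n" "perm_list n p ! j < perm_list n p ! i"
      "perm_list n p ! k < perm_list n p ! j"
      by (auto simp: occs321_def)
    then show "x \<in> occ321 n p"
      using x less_iff[of j i] less_iff[of k j] by (auto simp: occ321_def)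
  qed
  moreover have "inj_on ?g (occs321 (perm_list n p))"
    by (rule inj_onI) auto
  ultimately show ?thesis
    by (simp add: card_image)
qed

lemma inj_on_perm_list: "inj_on (perm_list n) {p. p permutes {1..n}}"
proof (rule inj_onI, rule ext)
  fix p q x
  assume p: "p \<in> {p. p permutes {1..n}}" and q: "q \<in> {p. p permutes {1..n}}"
    and eq: "perm_list n p = perm_list n q"
  show "p x = q x"
  proof (cases "x \<in> {1..n}")
    case True
    then obtain i where i: "i < n" "x = Suc i"
      by (cases x) auto
    then have "p (Suc i) - 1 = q (Suc i) - 1"
      using eq perm_list_nth[of i n p] perm_list_nth[of i n q] by simp
    moreover have "1 \<le> p (Suc i)" "1 \<le> q (Suc i)"
      using p q i permutes_atLeastAtMost_range[of p n i] permutes_atLeastAtMost_range[of q n i] by auto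
    ultimately show ?thesis
      using i by arith
  next
    case False
    then show ?thesis
      using p q by (simp add: permutes_not_in)
  qed
qed

lemma perm_list_surj:
  assumes xs: "xs \<in> perm_lists n"
  obtains p where "p permutes {1..n}" "perm_list n p = xs"
proof -
  have len: "length xs = n" and dist: "distinct xs" and set: "set xs = {0..<n}"
    using xs length_perm_lists by (auto simp: perm_lists_def)
  let ?f = "\<lambda>x. Suc (xs ! (x - 1))"
  have "bij_betw ?f {1..n} {1..n}"
  proof (rule bij_betw_imageI)
    show "inj_on ?f {1..n}"
      using dist len by (auto simp: inj_on_def nth_eq_iff_index_eq)
    show "?f ` {1..n} = {1..n}"
    proof (intro equalityI subsetI)
      fix y assume "y \<in> ?f ` {1..n}"
      then obtain x where "x \<in> {1..n}" "y = ?f x"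
        by blast
      moreover have "xs ! (x - 1) \<in> set xs" if "x \<in> {1..n}" for x
        using that len by auto
      ultimately show "y \<in> {1..n}"
        using set by fastforce
    next
      fix y assume y: "y \<in> {1..n}"
      then have "y - 1 \<in> set xs"
        using set by auto
      then obtain i where "i < n" "xs ! i = y - 1"
        using len by (auto simp: in_set_conv_nth)
      then have "Suc i \<in> {1..n}" "y = ?f (Suc i)"
        using y by auto
      then show "y \<in> ?f ` {1..n}"
        by blast
    qed
  qed
  then have "restrict_id ?f {1..n} permutes {1..n}"
    by (rule permutes_restrict_id)
  moreover have "perm_list n (restrict_id ?f {1..n}) = xs"
    using len by (intro nth_equalityI) (auto simp: restrict_id_def)
  ultimately show thesis
    by (rule that)
qed

lemma card_permutes_one321: "card {p. p permutes {1..n} \<and> card (occ321 n p) = 1} = card (one321 n)"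
proof -
  let ?S = "{p. p permutes {1..n} \<and> card (occ321 n p) = 1}"
  have "perm_list n ` ?S = one321 n"
  proof (intro equalityI subsetI)
    fix xs assume "xs \<in> perm_list n ` ?S"
    then show "xs \<in> one321 n"
      using perm_list_perm_lists card_occ321_perm_list by (auto simp: one321_def)
  next
    fix xs assume xs: "xs \<in> one321 n"
    then obtain p where "p permutes {1..n}" "perm_list n p = xs"
      using perm_list_surj by (auto simp: one321_def)
    then show "xs \<in> perm_list n ` ?S"
      using card_occ321_perm_list xs by (force simp: one321_def)
  qed
  moreover have "inj_on (perm_list n) ?S"
    by (rule inj_on_subset[OF inj_on_perm_list]) auto
  ultimately show ?thesis
    using card_image by fastforce
qed

theorem mainTheorem1:
  fixes n :: nat
  assumes "n \<ge> 1"
  shows "real (card {p. p permutes {1..n} \<and> card (occ321 n p) = 1})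
         = (if n < 3 then 0 else 3 / real n * real ((2 * n) choose (n + 3)))"
proof (cases "n < 3")
  case True
  then show ?thesis
    using card_permutes_one321 card_one321[of n] by simp
next
  case False
  then have "2 * n * card (one321 n) = 6 * ((2 * n) choose (n - 3))"
    using card_one321_ballot ballot_formula[of "n - 3" 6] by (simp add: algebra_simps)
  also have "(2 * n) choose (n - 3) = (2 * n) choose (n + 3)"
    using binomial_symmetric[of "n + 3" "2 * n"] False by simp
  finally have "n * card (one321 n) = 3 * ((2 * n) choose (n + 3))"
    by simp
  then have "real n * real (card (one321 n)) = 3 * real ((2 * n) choose (n + 3))"
    by (metis of_nat_mult of_nat_numeral)
  then show ?thesis
    using card_permutes_one321 False by (simp add: field_simps)
qed

end
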